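(* Suppose Assumptions 1 and 2 hold and the learner runs the TH LASSO bandit algorithm with some $\lambda_0>0$. Let $C_0=\min\{\frac12,\frac{\phi_0^2}{256s_0s_A^2}\}$, $\hat\Sigma_t=\frac1t\sum_{s=1}^tA_sA_s^\top$ and $\Sigma_t=\frac1t\sum_{s=1}^t\mathbb E[A_sA_s^\top\mid\mathcal H_{s-1}]$. Then for all $t\ge\frac{2\log(2d^2)}{C_0^2}$, $$\Pr\Big(\frac{1}{2s_A^2}\|\hat\Sigma_t-\Sigma_t\|_\infty\ge\frac{\phi^2(\Sigma_t,S)}{64s_0s_A^2}\Big)\le\exp\Big(-\frac{tC_0^2}{2}\Big),$$ where $\|M\|_\infty=\max_{i,j}|M_{ij}|$ is the entrywise maximum norm.
   Context: Model: Fix integers $K\ge 2$, $d\ge 1$ and an unknown $\theta\in\mathbb R^d$. In each round $t=1,2,\dots$ a context set $\mathcal A_t=\{A_{t,1},\dots,A_{t,K}\}$ with $A_{t,k}\in\mathbb R^d$ is revealed; the sequence $(\mathcal A_t)_{t\ge1}$ is i.i.d. with distribution $p_A$ on $\mathbb R^{K\times d}$. The learner selects $A_t\in\mathcal A_t$, measurable with respect to $\mathcal F_t=\sigma(\mathcal A_1,A_1,r_1,\dots,\mathcal A_{t-1},A_{t-1},r_{t-1},\mathcal A_t)$ (together with independent internal randomization for tie-breaking), and observes $r_t=\langle A_t,\theta\rangle+\varepsilon_t$, where conditionally on $\mathcal F_t$ and $A_t$ the noise $\varepsilon_t$ has mean zero and is sub-Gaussian with variance proxy $\sigma^2$. $\mathcal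 H_{s-1}$ denotes the sigma-algebra generated by all observations (contexts, choices, rewards and tie-breaking randomness) of rounds $1,\dots,s-1$. Notation: $S=\{i\in[d]:\theta_i\neq0\}$; for $B\subset[d]$ and $x\in\mathbb R^d$, $x_B\in\mathbb R^d$ has coordinates $x_i\mathbb 1\{i\in B\}$. Assumption 1: $\|\theta\|_0\le s_0$ for an integer $s_0\ge1$; $\|\theta\|_2\le s_2$; and almost surely $\|A_{t,k}\|_2\le s_A$ for all $t,k$. Compatibility constant: for $M\in\mathbb R^{d\times d}$ and $S_0\subset[d]$, $\phi^2(M,S_0)=\min\{ s_0\, x^\top Mx/\|x_{S_0}\|_1^2 : x\in\mathbb R^d,\ \|x_{S_0}\|_1\ne0,\ \|x_{S_0^c}\|_1\le3\|x_{S_0}\|_1\}$. Assumption 2: there is $\phi_0>0$ such that for every $\theta'\in\mathbb R^d$ the matrix $\Sigma(\theta')=\mathbb E_{\mathcal A\sim p_A}\big[\sum_{k=1}^K A_kA_k^\top\mathbb 1\{k=\arg\max_{k'}\langle A_{k'},\theta'\rangle\}\big]$ satisfies $\phi^2(\Sigma(\theta'),S)\ge\phi_0^2$. TH LASSO bandit algorithm (parameter $\lambda_0>0$), with $\hat\theta_1$ arbitrary (e.g. $0$): in round $t$, pull $A_t\in\arg\max_{A\in\mathcal A_t}\langle A,\hat\theta_t\rangle$ (ties broken uniformly at random) and observe $r_t$. Set $\lambda_t=\lambda_0\sqrt{2\log t\log d/t}$, let $\mathbf A\in\mathbb R^{t\times d}$ have rows $A_1^\top,\dots,A_t^\top$ and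 $R=(r_1,\dots,r_t)^\top$; compute $\hat\theta_0^{(t)}\in\arg\min_{\theta'}\frac1t\|R-\mathbf A\theta'\|_2^2+\lambda_t\|\theta'\|_1$, $\hat S_0^{(t)}=\{j:|(\hat\theta_0^{(t)})_j|>4\lambda_t\}$, $\hat S_1^{(t)}=\{j\in\hat S_0^{(t)}:|(\hat\theta_0^{(t)})_j|\ge4\lambda_t\sqrt{|\hat S_0^{(t)}|}\}$; with $\mathbf A(\hat S_1^{(t)})$ the submatrix of columns in $\hat S_1^{(t)}$, set $\hat\theta_{t+1}$ equal to $(\mathbf A(\hat S_1^{(t)})^\top\mathbf A(\hat S_1^{(t)}))^{-1}\mathbf A(\hat S_1^{(t)})^\top R$ on coordinates in $\hat S_1^{(t)}$ and $0$ elsewhere. *)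

theory Defs
  imports "HOL-Probability.Probability"
begin

definition restr_vec :: "'d set \<Rightarrow> real^'d \<Rightarrow> real^'d" where
  "restr_vec B x = (\<chi> i. if i \<in> B then x $ i else 0)"

definition l1norm :: "real^'d::finite \<Rightarrow> real" where
  "l1norm x = (\<Sum>i\<in>UNIV. \<bar>x $ i\<bar>)"

definition outer :: "real^'d \<Rightarrow> real^'d^'d" where
  "outer a = (\<chi> i j. a $ i * a $ j)"

definition maxnorm :: "real^'d::finite^'d \<Rightarrow> real" where
  "maxnorm A = Max {\<bar>A $ i $ j\<bar> | i j. True}"

text \<open>Compatibility constant phi^2(M,S0) (min over the cone; Inf in ereal, so the
  empty constraint set (S0 empty) gives +infinity).\<close>
definition compat :: "nat \<Rightarrow> real^'d::finite^'d \<Rightarrow> 'd set \<Rightarrow> ereal" where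
  "compat s0 A S0 =
     (INF x \<in> {x. l1norm (restr_vec S0 x) \<noteq> 0 \<and>
                  l1norm (restr_vec (- S0) x) \<le> 3 * l1norm (restr_vec S0 x)}.
        ereal (real s0 * (x \<bullet> (A *v x)) / (l1norm (restr_vec S0 x))\<^sup>2))"

text \<open>Greedy set of arms, context set a = (A_1,...,A_K) with A_k = a $ k.\<close>
definition argmax_arms :: "real^'d^'k \<Rightarrow> real^'d \<Rightarrow> 'k set" where
  "argmax_arms a th = {k. \<forall>k'. a $ k' \<bullet> th \<le> a $ k \<bullet> th}"

text \<open>Sigma(theta'): expected Gram matrix of the greedily pulled arm, ties broken
  uniformly at random.\<close>
definition Sigma_pop :: "(real^'d^'k) measure \<Rightarrow> real^'d \<Rightarrow> real^'d^'d" where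
  "Sigma_pop pA th = (\<chi> i j. integral\<^sup>L pA (\<lambda>a.
      \<Sum>k\<in>UNIV. a $ k $ i * a $ k $ j *
        (if k \<in> argmax_arms a th then 1 / real (card (argmax_arms a th)) else 0)))"

text \<open>Least squares restricted to the coordinates B: the vector v supported on B with
  (G v)_j = b_j for j in B, i.e. v_B = (A(B)^T A(B))^{-1} A(B)^T R when G = A^T A, b = A^T R.\<close>
definition ols :: "'d set \<Rightarrow> real^'d^'d \<Rightarrow> real^'d \<Rightarrow> real^'d" where
  "ols B G b = (THE v. (\<forall>j. j \<notin> B \<longrightarrow> v $ j = 0) \<and> (\<forall>j\<in>B. (G *v v) $ j = b $ j))"

definition lasso_lambda :: "real \<Rightarrow> nat \<Rightarrow> nat \<Rightarrow> real" where
  "lasso_lambda lam0 d t = lam0 * sqrt (2 * ln (real t) * ln (real d) / real t)"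

text \<open>Given data (A_s, r_s), s = 1..t, and a LASSO solution L, the next estimate.\<close>
definition th_update :: "real \<Rightarrow> nat \<Rightarrow> (nat \<Rightarrow> real^'d::finite) \<Rightarrow> (nat \<Rightarrow> real) \<Rightarrow> real^'d \<Rightarrow> real^'d" where
  "th_update lt t A r L =
     (let S0 = {j. \<bar>L $ j\<bar> > 4 * lt};
          S1 = {j \<in> S0. \<bar>L $ j\<bar> \<ge> 4 * lt * sqrt (real (card S0))}
      in ols S1 (\<Sum>s\<in>{1..t}. outer (A s)) (\<Sum>s\<in>{1..t}. r s *\<^sub>R A s))"

definition lasso_obj :: "real \<Rightarrow> nat \<Rightarrow> (nat \<Rightarrow> real^'d::finite) \<Rightarrow> (nat \<Rightarrow> real) \<Rightarrow> real^'d \<Rightarrow> real" where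
  "lasso_obj lt t A r th = (1 / real t) * (\<Sum>s\<in>{1..t}. (r s - A s \<bullet> th)\<^sup>2) + lt * l1norm th"

definition preimgs :: "'w measure \<Rightarrow> ('w \<Rightarrow> 'a) \<Rightarrow> 'a measure \<Rightarrow> 'w set set" where
  "preimgs M f N = {f -` B \<inter> space M | B. B \<in> sets N}"

definition hist :: "'w measure \<Rightarrow> (nat \<Rightarrow> 'w \<Rightarrow> real^'d^'k) \<Rightarrow> (nat \<Rightarrow> 'w \<Rightarrow> 'k)
    \<Rightarrow> (nat \<Rightarrow> 'w \<Rightarrow> real) \<Rightarrow> nat \<Rightarrow> 'w measure" where
  "hist M X I r s = sigma (space M)
     (\<Union>u\<in>{1..s}. preimgs M (X u) borel \<union> preimgs M (I u) (count_space UNIV)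
                   \<union> preimgs M (r u) borel)"

definition hist_ctx :: "'w measure \<Rightarrow> (nat \<Rightarrow> 'w \<Rightarrow> real^'d^'k) \<Rightarrow> (nat \<Rightarrow> 'w \<Rightarrow> 'k)
    \<Rightarrow> (nat \<Rightarrow> 'w \<Rightarrow> real) \<Rightarrow> nat \<Rightarrow> 'w measure" where
  "hist_ctx M X I r t = sigma (space M) (sets (hist M X I r (t - 1)) \<union> preimgs M (X t) borel)"

definition hist_ctx_act :: "'w measure \<Rightarrow> (nat \<Rightarrow> 'w \<Rightarrow> real^'d^'k) \<Rightarrow> (nat \<Rightarrow> 'w \<Rightarrow> 'k)
    \<Rightarrow> (nat \<Rightarrow> 'w \<Rightarrow> real) \<Rightarrow> nat \<Rightarrow> 'w measure" where
  "hist_ctx_act M X I r t = sigma (space M)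
     (sets (hist_ctx M X I r t) \<union> preimgs M (I t) (count_space UNIV))"

end

theory Submission
  imports Defs
begin

text \<open>Given the history \<open>H (s - 1)\<close>, the estimate \<open>\<theta>\<^sub>s\<close> is already fixed, the context of round
  \<open>s\<close> is a fresh sample from \<open>p\<^sub>A\<close> and ties are broken uniformly, so by the freezing lemma
  \<open>E[A\<^sub>s A\<^sub>s\<^sup>T | H (s - 1)] = \<Sigma>(\<theta>\<^sub>s)\<close> almost surely. Since the compatibility constant is concave,
  Assumption 2 then gives \<open>\<phi>\<^sup>2(\<Sigma>\<^sub>t, S) \<ge> \<phi>\<^sub>0\<^sup>2\<close> almost surely, and on that event the bad event forces
  some entry of the empirical Gram matrix to deviate from \<open>\<Sigma>\<^sub>t\<close> by at least \<open>8 s\<^sub>A\<^sup>2 C\<^sub>0\<close>. Each entry is an average of \<open>t\<close>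
  martingale differences bounded by \<open>2 s\<^sub>A\<^sup>2\<close>, so Azuma's inequality and a union bound over the
  \<open>d\<^sup>2\<close> entries bound the probability by \<open>2 d\<^sup>2 exp (-8 t C\<^sub>0\<^sup>2)\<close>, which is at most
  \<open>exp (-t C\<^sub>0\<^sup>2 / 2)\<close> as soon as \<open>t C\<^sub>0\<^sup>2 \<ge> 2 log (2 d\<^sup>2)\<close>.\<close>

section \<open>Azuma's inequality\<close>

lemma cosh_le_exp_half_square:
  fixes y :: real
  shows "(exp (-y) + exp y) / 2 \<le> exp (y\<^sup>2 / 2)"
proof -
  have nonneg_case: "(exp (-y) + exp y) / 2 \<le> exp (y\<^sup>2 / 2)" if "y \<ge> 0" for y :: real
  proof -
    have "-(2*y) * (1/2) + ln (1 + (1/2) * (exp (2*y) - 1)) \<le> (2*y)\<^sup>2 / 8"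
      using Hoeffdings_lemma_aux[of "2*y" "1/2"] that by simp
    then have "ln ((1 + exp (2*y)) / 2) \<le> y + y\<^sup>2 / 2"
      by (simp add: power2_eq_square field_simps)
    then have "(1 + exp (2*y)) / 2 \<le> exp y * exp (y\<^sup>2 / 2)"
      by (smt (verit) exp_add exp_gt_zero exp_le_cancel_iff exp_ln)
    moreover have "(exp (-y) + exp y) / 2 = ((1 + exp (2*y)) / 2) / exp y"
      by (simp add: field_simps exp_minus flip: exp_add)
    ultimately show ?thesis
      by (simp add: pos_divide_le_eq mult.commute)
  qed
  show ?thesis
    using nonneg_case[of y] nonneg_case[of "-y"] by (cases "y \<ge> 0") (simp_all add: add.commute)
qed

lemma exp_le_chord:
  fixes l c x :: real
  assumes "l \<ge> 0" and "c > 0" and "\<bar>x\<bar> \<le> c"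
  shows "exp (l * x) \<le> (exp (-(l*c)) + exp (l*c)) / 2 + ((exp (l*c) - exp (-(l*c))) / (2*c)) * x"
proof -
  define u where "u = (c + x) / (2*c)"
  have u: "0 \<le> u" "u \<le> 1" using assms by (auto simp: u_def field_simps)
  have x_eq: "x = (1 - u) *\<^sub>R (-c) + u *\<^sub>R c" using assms by (simp add: u_def field_simps)
  have "exp (l * x) \<le> (1 - u) * exp (l * (-c)) + u * exp (l * c)"
    using convex_onD[OF convex_on_exp[OF \<open>l \<ge> 0\<close>], of u "-c" c] u unfolding x_eq by simp
  also have "\<dots> = (exp (-(l*c)) + exp (l*c)) / 2 + ((exp (l*c) - exp (-(l*c))) / (2*c)) * x"
    using assms by (simp add: u_def field_simps)
  finally show ?thesis .
qed

lemma cond_hoeffding_lemma: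
  assumes M: "prob_space M" and G: "subalgebra M G"
    and D_meas[measurable]: "D \<in> borel_measurable M"
    and D_bounded: "AE \<omega> in M. \<bar>D \<omega>\<bar> \<le> c" and c: "c > 0"
    and D_centered: "AE \<omega> in M. real_cond_exp M G D \<omega> = 0" and l: "l \<ge> 0"
  shows "AE \<omega> in M. real_cond_exp M G (\<lambda>\<omega>. exp (l * D \<omega>)) \<omega> \<le> exp (l\<^sup>2 * c\<^sup>2 / 2)"
proof -
  interpret prob_space M by fact
  interpret finite_measure_subalgebra M G by unfold_locales (rule G)
  define \<alpha> where "\<alpha> = (exp (-(l*c)) + exp (l*c)) / 2"
  define \<beta> where "\<beta> = (exp (l*c) - exp (-(l*c))) / (2*c)"
  have D_int: "integrable M D"
    by (rule integrable_const_bound[where B=c]) (use D_bounded in auto)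
  have exp_int: "integrable M (\<lambda>\<omega>. exp (l * D \<omega>))"
    by (rule integrable_const_bound[where B="exp (l*c)"])
       (use D_bounded l in \<open>auto elim!: eventually_mono intro: mult_left_mono\<close>)
  have \<alpha>_le: "\<alpha> \<le> exp (l\<^sup>2 * c\<^sup>2 / 2)"
    using cosh_le_exp_half_square[of "l*c"] by (simp add: \<alpha>_def power_mult_distrib)
  have "AE \<omega> in M. real_cond_exp M G (\<lambda>\<omega>. exp (l * D \<omega>)) \<omega>
                     \<le> real_cond_exp M G (\<lambda>\<omega>. \<alpha> + \<beta> * D \<omega>) \<omega>"
  proof (rule real_cond_exp_mono[OF _ exp_int])
    show "AE \<omega> in M. exp (l * D \<omega>) \<le> \<alpha> + \<beta> * D \<omega>"
      using D_bounded by eventually_elim (unfold \<alpha>_def \<beta>_def, rule exp_le_chord[OF l c])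
  qed (use D_int in auto)
  moreover have "AE \<omega> in M. real_cond_exp M G (\<lambda>\<omega>. \<alpha> + \<beta> * D \<omega>) \<omega>
      = real_cond_exp M G (\<lambda>\<omega>. \<alpha>) \<omega> + real_cond_exp M G (\<lambda>\<omega>. \<beta> * D \<omega>) \<omega>"
    by (rule real_cond_exp_add) (use D_int in auto)
  moreover have "AE \<omega> in M. real_cond_exp M G (\<lambda>\<omega>. \<alpha>) \<omega> = \<alpha>"
    by (rule real_cond_exp_F_meas) auto
  moreover have "AE \<omega> in M. real_cond_exp M G (\<lambda>\<omega>. \<beta> * D \<omega>) \<omega> = \<beta> * real_cond_exp M G D \<omega>"
    by (rule real_cond_exp_cmult[OF D_int])
  moreover note D_centered
  ultimately show ?thesis
    by eventually_elim (use \<alpha>_le in auto)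
qed

lemma integral_mult_le_of_real_cond_exp_le:
  assumes M: "prob_space M" and F: "subalgebra M F"
    and Z_meas: "Z \<in> borel_measurable F" and Z_nonneg: "\<And>\<omega>. 0 \<le> Z \<omega>" and Z_int: "integrable M Z"
    and g_meas: "g \<in> borel_measurable M" and Zg_int: "integrable M (\<lambda>\<omega>. Z \<omega> * g \<omega>)"
    and g_le: "AE \<omega> in M. real_cond_exp M F g \<omega> \<le> b"
  shows "(\<integral>\<omega>. Z \<omega> * g \<omega> \<partial>M) \<le> (\<integral>\<omega>. Z \<omega> \<partial>M) * b"
proof -
  interpret prob_space M by fact
  interpret finite_measure_subalgebra M F by unfold_locales (rule F)
  have "(\<integral>\<omega>. Z \<omega> * g \<omega> \<partial>M) = (\<integral>\<omega>. Z \<omega> * real_cond_exp M F g \<omega> \<partial>M)"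
    by (rule real_cond_exp_intg(2)[OF Zg_int Z_meas g_meas, symmetric])
  also have "\<dots> \<le> (\<integral>\<omega>. Z \<omega> * b \<partial>M)"
    using g_le Z_nonneg
    by (intro integral_mono_AE real_cond_exp_intg(1)[OF Zg_int Z_meas g_meas])
       (auto simp: Z_int elim!: eventually_mono intro: mult_left_mono)
  finally show ?thesis by simp
qed

lemma azuma_mgf_le:
  fixes D :: "nat \<Rightarrow> 'w \<Rightarrow> real"
  assumes M: "prob_space M"
    and F: "\<And>n. subalgebra M (F n)"
    and F_mono: "\<And>m n. m \<le> n \<Longrightarrow> sets (F m) \<subseteq> sets (F n)"
    and D_meas: "\<And>s. s \<ge> 1 \<Longrightarrow> D s \<in> borel_measurable (F s)"
    and D_bounded: "\<And>s. s \<ge> 1 \<Longrightarrow> AE \<omega> in M. \<bar>D s \<omega>\<bar> \<le> c"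
    and D_centered: "\<And>s. s \<ge> 1 \<Longrightarrow> AE \<omega> in M. real_cond_exp M (F (s - 1)) (D s) \<omega> = 0"
    and c: "c > 0" and l: "l \<ge> 0"
  shows "integrable M (\<lambda>\<omega>. exp (l * (\<Sum>s\<in>{1..n}. D s \<omega>)))"
    and "(\<integral>\<omega>. exp (l * (\<Sum>s\<in>{1..n}. D s \<omega>)) \<partial>M) \<le> exp (real n * (l\<^sup>2 * c\<^sup>2 / 2))"
proof -
  interpret prob_space M by fact
  define S where "S k \<omega> = (\<Sum>s\<in>{1..k}. D s \<omega>)" for k \<omega>
  have F_sub: "subalgebra (F n) (F m)" if "m \<le> n" for m n
    using F_mono[OF that] F[of m] F[of n] by (simp add: subalgebra_def)
  have D_meas_M: "D s \<in> borel_measurable M" if "1 \<le> s" for s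
    by (rule measurable_from_subalg[OF F D_meas[OF that]])
  have S_meas: "S k \<in> borel_measurable (F k)" for k
    unfolding S_def
    by (intro borel_measurable_sum measurable_from_subalg[OF F_sub D_meas]) auto
  have S_bounded: "AE \<omega> in M. \<bar>S k \<omega>\<bar> \<le> real k * c" for k
  proof -
    have "AE \<omega> in M. \<forall>s\<in>{1..k}. \<bar>D s \<omega>\<bar> \<le> c"
      by (rule AE_finite_allI) (auto intro: D_bounded)
    then show ?thesis
      unfolding S_def
      by eventually_elim (rule order.trans[OF sum_abs], use sum_mono[of "{1..k}" _ "\<lambda>_. c"] in auto)
  qed
  have S_int: "integrable M (\<lambda>\<omega>. exp (l * S k \<omega>))" for k
  proof (rule integrable_const_bound[where B="exp (l * (real k * c))"])
    show "AE \<omega> in M. norm (exp (l * S k \<omega>)) \<le> exp (l * (real k * c))"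
      using S_bounded[of k] by eventually_elim (use l in \<open>auto intro: mult_left_mono\<close>)
    show "(\<lambda>\<omega>. exp (l * S k \<omega>)) \<in> borel_measurable M"
      using measurable_from_subalg[OF F S_meas] by measurable
  qed
  then show "integrable M (\<lambda>\<omega>. exp (l * (\<Sum>s\<in>{1..n}. D s \<omega>)))"
    by (simp add: S_def)
  have "(\<integral>\<omega>. exp (l * S n \<omega>) \<partial>M) \<le> exp (real n * (l\<^sup>2 * c\<^sup>2 / 2))"
  proof (induction n)
    case 0
    then show ?case by (simp add: S_def prob_space)
  next
    case (Suc n)
    have S_Suc: "exp (l * S (Suc n) \<omega>) = exp (l * S n \<omega>) * exp (l * D (Suc n) \<omega>)" for \<omega>
      by (simp add: S_def distrib_left exp_add)
    have cond_mgf: "AE \<omega> in M. real_cond_exp M (F n) (\<lambda>\<omega>. exp (l * D (Suc n) \<omega>)) \<omega> \<le> exp (l\<^sup>2 * c\<^sup>2 / 2)"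
      using D_centered[of "Suc n"] by (intro cond_hoeffding_lemma[OF M F D_meas_M D_bounded c _ l]) auto
    have "(\<integral>\<omega>. exp (l * S (Suc n) \<omega>) \<partial>M) \<le> (\<integral>\<omega>. exp (l * S n \<omega>) \<partial>M) * exp (l\<^sup>2 * c\<^sup>2 / 2)"
      unfolding S_Suc
      using S_meas[of n] D_meas_M[of "Suc n"] S_int[of "Suc n"] S_int[of n] cond_mgf
      by (intro integral_mult_le_of_real_cond_exp_le[OF M F]) (auto simp: S_Suc)
    also have "\<dots> \<le> exp (real n * (l\<^sup>2 * c\<^sup>2 / 2)) * exp (l\<^sup>2 * c\<^sup>2 / 2)"
      using Suc.IH by (simp add: mult_right_mono)
    also have "\<dots> = exp (real (Suc n) * (l\<^sup>2 * c\<^sup>2 / 2))"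
      by (simp add: algebra_simps flip: exp_add)
    finally show ?case .
  qed
  then show "(\<integral>\<omega>. exp (l * (\<Sum>s\<in>{1..n}. D s \<omega>)) \<partial>M) \<le> exp (real n * (l\<^sup>2 * c\<^sup>2 / 2))"
    by (simp add: S_def)
qed

lemma azuma_upper_tail:
  fixes D :: "nat \<Rightarrow> 'w \<Rightarrow> real"
  assumes M: "prob_space M"
    and F: "\<And>n. subalgebra M (F n)"
    and F_mono: "\<And>m n. m \<le> n \<Longrightarrow> sets (F m) \<subseteq> sets (F n)"
    and D_meas: "\<And>s. s \<ge> 1 \<Longrightarrow> D s \<in> borel_measurable (F s)"
    and D_bounded: "\<And>s. s \<ge> 1 \<Longrightarrow> AE \<omega> in M. \<bar>D s \<omega>\<bar> \<le> c"
    and D_centered: "\<And>s. s \<ge> 1 \<Longrightarrow> AE \<omega> in M. real_cond_exp M (F (s - 1)) (D s) \<omega> = 0"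
    and c: "c > 0" and n: "n \<ge> 1" and \<epsilon>: "\<epsilon> > 0"
  shows "measure M {\<omega> \<in> space M. (\<Sum>s\<in>{1..n}. D s \<omega>) \<ge> \<epsilon>} \<le> exp (- (\<epsilon>\<^sup>2 / (2 * real n * c\<^sup>2)))"
proof -
  interpret prob_space M by fact
  define l where "l = \<epsilon> / (real n * c\<^sup>2)"
  have l: "l > 0" using n c \<epsilon> by (simp add: l_def)
  note mgf = azuma_mgf_le[where F=F and D=D and n=n, OF M F F_mono D_meas D_bounded D_centered c less_imp_le[OF l]]
  have "{\<omega> \<in> space M. (\<Sum>s\<in>{1..n}. D s \<omega>) \<ge> \<epsilon>} =
        {\<omega> \<in> space M. exp (l * (\<Sum>s\<in>{1..n}. D s \<omega>)) \<ge> exp (l * \<epsilon>)}"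
    using l by auto
  also have "measure M \<dots> \<le> (\<integral>\<omega>. exp (l * (\<Sum>s\<in>{1..n}. D s \<omega>)) \<partial>M) / exp (l * \<epsilon>)"
    by (rule integral_Markov_inequality_measure) (use mgf in auto)
  also have "\<dots> \<le> exp (real n * (l\<^sup>2 * c\<^sup>2 / 2) - l * \<epsilon>)"
    using mgf by (simp add: divide_right_mono exp_diff)
  also have "real n * (l\<^sup>2 * c\<^sup>2 / 2) - l * \<epsilon> = - (\<epsilon>\<^sup>2 / (2 * real n * c\<^sup>2))"
    using n c by (simp add: l_def power2_eq_square field_simps)
  finally show ?thesis .
qed

lemma azuma_tail:
  fixes D :: "nat \<Rightarrow> 'w \<Rightarrow> real"
  assumes M: "prob_space M"
    and F: "\<And>n. subalgebra M (F n)"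
    and F_mono: "\<And>m n. m \<le> n \<Longrightarrow> sets (F m) \<subseteq> sets (F n)"
    and D_meas: "\<And>s. s \<ge> 1 \<Longrightarrow> D s \<in> borel_measurable (F s)"
    and D_bounded: "\<And>s. s \<ge> 1 \<Longrightarrow> AE \<omega> in M. \<bar>D s \<omega>\<bar> \<le> c"
    and D_centered: "\<And>s. s \<ge> 1 \<Longrightarrow> AE \<omega> in M. real_cond_exp M (F (s - 1)) (D s) \<omega> = 0"
    and c: "c > 0" and n: "n \<ge> 1" and \<epsilon>: "\<epsilon> > 0"
  shows "measure M {\<omega> \<in> space M. \<bar>\<Sum>s\<in>{1..n}. D s \<omega>\<bar> \<ge> \<epsilon>} \<le> 2 * exp (- (\<epsilon>\<^sup>2 / (2 * real n * c\<^sup>2)))"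
proof -
  interpret prob_space M by fact
  have D_meas_M: "D s \<in> borel_measurable M" if "1 \<le> s" for s
    by (rule measurable_from_subalg[OF F D_meas[OF that]])
  have [measurable]: "(\<lambda>\<omega>. \<Sum>s\<in>{1..n}. D s \<omega>) \<in> borel_measurable M"
    "(\<lambda>\<omega>. \<Sum>s\<in>{1..n}. - D s \<omega>) \<in> borel_measurable M"
    by (auto intro!: borel_measurable_sum D_meas_M)
  have neg_centered: "AE \<omega> in M. real_cond_exp M (F (s - 1)) (\<lambda>\<omega>. - D s \<omega>) \<omega> = 0" if s: "s \<ge> 1" for s
  proof -
    interpret finite_measure_subalgebra M "F (s - 1)" by unfold_locales (rule F)
    have "integrable M (D s)"
      by (rule integrable_const_bound[where B=c]) (use D_bounded[OF s] D_meas_M[OF s] in auto)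
    from real_cond_exp_cmult[OF this, of "-1"] D_centered[OF s]
    show ?thesis by eventually_elim simp
  qed
  have lower: "measure M {\<omega> \<in> space M. (\<Sum>s\<in>{1..n}. - D s \<omega>) \<ge> \<epsilon>} \<le> exp (- (\<epsilon>\<^sup>2 / (2 * real n * c\<^sup>2)))"
    using D_meas D_bounded
    by (intro azuma_upper_tail[where F=F and D="\<lambda>s \<omega>. - D s \<omega>", OF M F F_mono _ _ neg_centered c n \<epsilon>]) auto
  have "measure M {\<omega> \<in> space M. \<bar>\<Sum>s\<in>{1..n}. D s \<omega>\<bar> \<ge> \<epsilon>}
      \<le> measure M ({\<omega> \<in> space M. (\<Sum>s\<in>{1..n}. D s \<omega>) \<ge> \<epsilon>} \<union> {\<omega> \<in> space M. (\<Sum>s\<in>{1..n}. - D s \<omega>) \<ge> \<epsilon>})"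
    by (rule finite_measure_mono, force simp: sum_negf, measurable)
  also have "\<dots> \<le> measure M {\<omega> \<in> space M. (\<Sum>s\<in>{1..n}. D s \<omega>) \<ge> \<epsilon>} + measure M {\<omega> \<in> space M. (\<Sum>s\<in>{1..n}. - D s \<omega>) \<ge> \<epsilon>}"
    by (rule measure_Un_le; measurable)
  finally show ?thesis
    using azuma_upper_tail[where F=F and D=D, OF M F F_mono D_meas D_bounded D_centered c n \<epsilon>] lower by simp
qed

text \<open>The centred increments are bounded by \<open>2 b\<close>, whence the constant \<open>8 = 2 * 2\<^sup>2\<close>.\<close>
lemma azuma_centered_tail:
  fixes Y :: "nat \<Rightarrow> 'w \<Rightarrow> real"
  assumes M: "prob_space M"
    and F: "\<And>n. subalgebra M (F n)"
    and F_mono: "\<And>m n. m \<le> n \<Longrightarrow> sets (F m) \<subseteq> sets (F n)"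
    and Y_meas: "\<And>s. s \<ge> 1 \<Longrightarrow> Y s \<in> borel_measurable (F s)"
    and Y_bounded: "\<And>s. s \<ge> 1 \<Longrightarrow> AE \<omega> in M. \<bar>Y s \<omega>\<bar> \<le> b"
    and b: "b > 0" and n: "n \<ge> 1" and \<epsilon>: "\<epsilon> > 0"
  shows "measure M {\<omega> \<in> space M. \<bar>\<Sum>s\<in>{1..n}. Y s \<omega> - real_cond_exp M (F (s - 1)) (Y s) \<omega>\<bar> \<ge> \<epsilon>}
           \<le> 2 * exp (- (\<epsilon>\<^sup>2 / (8 * real n * b\<^sup>2)))"
proof -
  interpret prob_space M by fact
  define D where "D s \<omega> = Y s \<omega> - real_cond_exp M (F (s - 1)) (Y s) \<omega>" for s \<omega>
  have Y_int: "integrable M (Y s)" if "s \<ge> 1" for s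
    using Y_bounded[OF that] measurable_from_subalg[OF F Y_meas[OF that]]
    by (intro integrable_const_bound[where B=b]) auto
  have D_meas: "D s \<in> borel_measurable (F s)" if s: "s \<ge> 1" for s
  proof -
    have "subalgebra (F s) (F (s - 1))"
      using F_mono[of "s - 1" s] F[of s] F[of "s - 1"] by (simp add: subalgebra_def)
    from measurable_from_subalg[OF this borel_measurable_cond_exp] Y_meas[OF s]
    show ?thesis unfolding D_def[abs_def] by measurable
  qed
  have D_bounded: "AE \<omega> in M. \<bar>D s \<omega>\<bar> \<le> 2 * b" if s: "s \<ge> 1" for s
  proof -
    interpret finite_measure_subalgebra M "F (s - 1)" by unfold_locales (rule F)
    have "AE \<omega> in M. real_cond_exp M (F (s - 1)) (Y s) \<omega> \<le> b"
      using Y_bounded[OF s] by (intro real_cond_exp_le_c[OF Y_int[OF s]]) (auto elim!: eventually_mono)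
    moreover have "AE \<omega> in M. real_cond_exp M (F (s - 1)) (Y s) \<omega> \<ge> - b"
      using Y_bounded[OF s] by (intro real_cond_exp_ge_c[OF Y_int[OF s]]) (auto elim!: eventually_mono)
    ultimately show ?thesis
      using Y_bounded[OF s] by eventually_elim (auto simp: D_def abs_le_iff)
  qed
  have D_centered: "AE \<omega> in M. real_cond_exp M (F (s - 1)) (D s) \<omega> = 0" if s: "s \<ge> 1" for s
  proof -
    interpret finite_measure_subalgebra M "F (s - 1)" by unfold_locales (rule F)
    have E_int: "integrable M (real_cond_exp M (F (s - 1)) (Y s))"
      by (rule real_cond_exp_int(1)[OF Y_int[OF s]])
    have "AE \<omega> in M. real_cond_exp M (F (s - 1)) (D s) \<omega> =
        real_cond_exp M (F (s - 1)) (Y s) \<omega> - real_cond_exp M (F (s - 1)) (real_cond_exp M (F (s - 1)) (Y s)) \<omega>"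
      unfolding D_def[abs_def] by (rule real_cond_exp_diff[OF Y_int[OF s] E_int])
    moreover have "AE \<omega> in M. real_cond_exp M (F (s - 1)) (real_cond_exp M (F (s - 1)) (Y s)) \<omega>
                     = real_cond_exp M (F (s - 1)) (Y s) \<omega>"
      by (rule real_cond_exp_F_meas[OF E_int]) simp
    ultimately show ?thesis by eventually_elim simp
  qed
  have "measure M {\<omega> \<in> space M. \<bar>\<Sum>s\<in>{1..n}. D s \<omega>\<bar> \<ge> \<epsilon>} \<le> 2 * exp (- (\<epsilon>\<^sup>2 / (2 * real n * (2 * b)\<^sup>2)))"
    using b by (intro azuma_tail[where F=F and D=D, OF M F F_mono D_meas D_bounded D_centered _ n \<epsilon>]) auto
  then show ?thesis
    by (simp add: D_def power2_eq_square algebra_simps)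
qed

section \<open>Freezing lemma\<close>

lemma distr_pair_eq_pair_measure_if_indep:
  assumes M: "prob_space M" and G: "subalgebra M G"
    and X_meas[measurable]: "X \<in> M \<rightarrow>\<^sub>M SX" and Z_meas: "Z \<in> G \<rightarrow>\<^sub>M SZ"
    and indep: "prob_space.indep_set M (sets G) (preimgs M X SX)"
  shows "distr M SX X \<Otimes>\<^sub>M distr M SZ Z = distr M (SX \<Otimes>\<^sub>M SZ) (\<lambda>\<omega>. (X \<omega>, Z \<omega>))"
proof -
  interpret prob_space M by fact
  have Z_meas_M[measurable]: "Z \<in> M \<rightarrow>\<^sub>M SZ" by (rule measurable_from_subalg[OF G Z_meas])
  interpret PX: prob_space "distr M SX X" by (rule prob_space_distr) simp
  interpret PZ: prob_space "distr M SZ Z" by (rule prob_space_distr) simp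
  show ?thesis
  proof (rule pair_measure_eqI)
    show "sigma_finite_measure (distr M SX X)" "sigma_finite_measure (distr M SZ Z)"
      by (simp_all add: PX.sigma_finite_measure_axioms PZ.sigma_finite_measure_axioms)
  next
    fix A B assume "A \<in> sets (distr M SX X)" "B \<in> sets (distr M SZ Z)"
    then have A: "A \<in> sets SX" and B: "B \<in> sets SZ" by simp_all
    have "Z -` B \<inter> space M \<in> sets G"
      using measurable_sets[OF Z_meas B] G by (simp add: subalgebra_def)
    moreover have "X -` A \<inter> space M \<in> preimgs M X SX"
      using A by (auto simp: preimgs_def)
    ultimately have "prob ((Z -` B \<inter> space M) \<inter> (X -` A \<inter> space M))
                       = prob (Z -` B \<inter> space M) * prob (X -` A \<inter> space M)"
      by (rule indep_setD[OF indep])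
    moreover have "(\<lambda>\<omega>. (X \<omega>, Z \<omega>)) -` (A \<times> B) \<inter> space M = (Z -` B \<inter> space M) \<inter> (X -` A \<inter> space M)"
      by auto
    ultimately show "emeasure (distr M SX X) A * emeasure (distr M SZ Z) B
        = emeasure (distr M (SX \<Otimes>\<^sub>M SZ) (\<lambda>\<omega>. (X \<omega>, Z \<omega>))) (A \<times> B)"
      using A B by (simp add: emeasure_distr emeasure_eq_measure ennreal_mult'[symmetric] mult.commute)
  qed simp
qed

lemma real_cond_exp_indep_freeze:
  fixes X :: "'w \<Rightarrow> 'a" and Y :: "'w \<Rightarrow> 'b" and f :: "'a \<times> 'b \<Rightarrow> real"
  assumes M: "prob_space M" and G: "subalgebra M G"
    and X_meas[measurable]: "X \<in> M \<rightarrow>\<^sub>M SX" and Y_meas: "Y \<in> G \<rightarrow>\<^sub>M SY"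
    and indep: "prob_space.indep_set M (sets G) (preimgs M X SX)"
    and f_meas[measurable]: "f \<in> borel_measurable (SX \<Otimes>\<^sub>M SY)"
    and f_bounded: "\<And>z. \<bar>f z\<bar> \<le> c"
  shows "AE \<omega> in M. real_cond_exp M G (\<lambda>\<omega>. f (X \<omega>, Y \<omega>)) \<omega> = (\<integral>a. f (a, Y \<omega>) \<partial>distr M SX X)"
proof -
  interpret prob_space M by fact
  interpret finite_measure_subalgebra M G by unfold_locales (rule G)
  define P where "P = distr M SX X"
  interpret P: prob_space P unfolding P_def by (rule prob_space_distr) simp
  have Y_meas_M[measurable]: "Y \<in> M \<rightarrow>\<^sub>M SY" by (rule measurable_from_subalg[OF G Y_meas])
  define h where "h y = (\<integral>a. f (a, y) \<partial>P)" for y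
  have h_meas[measurable]: "h \<in> borel_measurable SY"
  proof -
    have "(\<lambda>(y, a). f (a, y)) \<in> borel_measurable (SY \<Otimes>\<^sub>M P)"
      by (simp add: P_def measurable_cong_sets[OF sets_pair_measure_cong[OF refl sets_distr] refl])
    then show ?thesis
      unfolding h_def by (rule P.borel_measurable_lebesgue_integral[of "\<lambda>y a. f (a, y)" SY])
  qed
  have h_bounded: "\<bar>h y\<bar> \<le> c" if "y \<in> space SY" for y
  proof -
    have "(\<lambda>a. f (a, y)) \<in> borel_measurable P"
      using that by (simp add: P_def)
    then have "\<bar>h y\<bar> \<le> (\<integral>a. c \<partial>P)"
      unfolding h_def
      by (intro order.trans[OF integral_abs_bound] integral_mono P.integrable_const_bound[where B=c])
         (auto intro: f_bounded order.trans[OF abs_ge_zero f_bounded])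
    then show ?thesis by (simp add: P.prob_space)
  qed
  show ?thesis
  proof (rule real_cond_exp_charact)
    show "integrable M (\<lambda>\<omega>. f (X \<omega>, Y \<omega>))"
      by (rule integrable_const_bound[where B=c]) (use f_bounded in auto)
    show "integrable M (\<lambda>\<omega>. \<integral>a. f (a, Y \<omega>) \<partial>distr M SX X)"
    proof (rule integrable_const_bound[where B=c])
      have "(\<lambda>\<omega>. h (Y \<omega>)) \<in> borel_measurable M" by measurable
      then show "(\<lambda>\<omega>. \<integral>a. f (a, Y \<omega>) \<partial>distr M SX X) \<in> borel_measurable M"
        by (simp add: h_def P_def)
    qed (use h_bounded measurable_space[OF Y_meas_M] in \<open>auto simp: h_def P_def\<close>)
    show "(\<lambda>\<omega>. \<integral>a. f (a, Y \<omega>) \<partial>distr M SX X) \<in> borel_measurable G"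
      using measurable_compose[OF Y_meas h_meas] by (simp add: h_def P_def)
  next
    fix A assume A: "A \<in> sets G"
    define Z where "Z \<omega> = (Y \<omega>, indicator A \<omega> :: real)" for \<omega>
    have Z_meas: "Z \<in> G \<rightarrow>\<^sub>M SY \<Otimes>\<^sub>M borel"
      unfolding Z_def using Y_meas A by measurable
    have [measurable]: "Z \<in> M \<rightarrow>\<^sub>M SY \<Otimes>\<^sub>M borel" by (rule measurable_from_subalg[OF G Z_meas])
    define Q where "Q = distr M (SY \<Otimes>\<^sub>M borel) Z"
    interpret Q: prob_space Q unfolding Q_def by (rule prob_space_distr) simp
    interpret PQ: pair_sigma_finite P Q
      by (simp add: pair_sigma_finite.intro P.sigma_finite_measure_axioms Q.sigma_finite_measure_axioms)
    have joint: "P \<Otimes>\<^sub>M Q = distr M (SX \<Otimes>\<^sub>M (SY \<Otimes>\<^sub>M borel)) (\<lambda>\<omega>. (X \<omega>, Z \<omega>))"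
      unfolding P_def Q_def by (rule distr_pair_eq_pair_measure_if_indep[OF M G X_meas Z_meas indep])
    define F where "F z = snd (snd z) * f (fst z, fst (snd z))" for z :: "'a \<times> ('b \<times> real)"
    have [measurable]: "F \<in> borel_measurable (SX \<Otimes>\<^sub>M (SY \<Otimes>\<^sub>M borel))"
      unfolding F_def by measurable
    have F_XZ: "F (X \<omega>, Z \<omega>) = indicator A \<omega> * f (X \<omega>, Y \<omega>)" for \<omega>
      by (simp add: F_def Z_def)
    have "integrable M (\<lambda>\<omega>. F (X \<omega>, Z \<omega>))"
      unfolding F_XZ using A G f_bounded
      by (intro integrable_const_bound[where B=c])
         (auto simp: indicator_def subalgebra_def intro: order.trans[OF _ f_bounded])
    then have F_int: "integrable (P \<Otimes>\<^sub>M Q) F"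
      unfolding joint by (subst integrable_distr_eq) auto
    have "(\<integral>\<omega>\<in>A. f (X \<omega>, Y \<omega>) \<partial>M) = (\<integral>\<omega>. F (X \<omega>, Z \<omega>) \<partial>M)"
      by (simp add: set_lebesgue_integral_def F_XZ)
    also have "\<dots> = integral\<^sup>L (P \<Otimes>\<^sub>M Q) F"
      unfolding joint by (rule integral_distr[symmetric]) auto
    also have "\<dots> = (\<integral>z. (\<integral>a. F (a, z) \<partial>P) \<partial>Q)"
      using PQ.integral_snd[of "\<lambda>a z. F (a, z)"] F_int by simp
    also have "\<dots> = (\<integral>z. snd z * h (fst z) \<partial>Q)"
      by (simp add: F_def h_def)
    also have "\<dots> = (\<integral>\<omega>. indicator A \<omega> * h (Y \<omega>) \<partial>M)"
      unfolding Q_def by (subst integral_distr) (auto simp: Z_def)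
    finally show "(\<integral>\<omega>\<in>A. f (X \<omega>, Y \<omega>) \<partial>M) = (\<integral>\<omega>\<in>A. (\<integral>a. f (a, Y \<omega>) \<partial>distr M SX X) \<partial>M)"
      by (simp add: set_lebesgue_integral_def h_def P_def)
  qed
qed

section \<open>Compatibility constant, maximum norm and union bound\<close>

lemma quadratic_form_scaleR_sum:
  fixes Ms :: "'a \<Rightarrow> real^'d::finite^'d"
  shows "x \<bullet> ((c *\<^sub>R (\<Sum>s\<in>A. Ms s)) *v x) = c * (\<Sum>s\<in>A. x \<bullet> (Ms s *v x))"
  by (induction A rule: infinite_finite_induct)
     (simp_all add: matrix_vector_mult_add_rdistrib inner_add_right algebra_simps
                flip: scaleR_matrix_vector_assoc)

text \<open>The compatibility constant is an infimum of functions linear in the matrix, hence concave.\<close>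
lemma compat_average_ge:
  fixes Ms :: "'a \<Rightarrow> real^'d::finite^'d"
  assumes "finite A" and "A \<noteq> {}" and compat_ge: "\<And>s. s \<in> A \<Longrightarrow> ereal \<phi> \<le> compat s0 (Ms s) S0"
  shows "ereal \<phi> \<le> compat s0 ((1 / real (card A)) *\<^sub>R (\<Sum>s\<in>A. Ms s)) S0"
  unfolding compat_def
proof (rule INF_greatest)
  fix x assume x: "x \<in> {x. l1norm (restr_vec S0 x) \<noteq> 0 \<and>
                          l1norm (restr_vec (- S0) x) \<le> 3 * l1norm (restr_vec S0 x)}"
  define L where "L = (l1norm (restr_vec S0 x))\<^sup>2"
  define q where "q s = real s0 * (x \<bullet> (Ms s *v x)) / L" for s
  have "\<phi> \<le> q s" if "s \<in> A" for s
  proof -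
    have "ereal \<phi> \<le> compat s0 (Ms s) S0" by (rule compat_ge[OF that])
    also have "\<dots> \<le> ereal (q s)"
      unfolding compat_def q_def L_def by (rule INF_lower[OF x])
    finally show ?thesis by simp
  qed
  then have "(1 / real (card A)) * (\<Sum>s\<in>A. \<phi>) \<le> (1 / real (card A)) * (\<Sum>s\<in>A. q s)"
    by (intro mult_left_mono sum_mono) auto
  moreover have "(1 / real (card A)) * (\<Sum>s\<in>A. \<phi>) = \<phi>"
    using assms(1,2) by simp
  moreover have "real s0 * (x \<bullet> (((1 / real (card A)) *\<^sub>R (\<Sum>s\<in>A. Ms s)) *v x)) / L
                   = (1 / real (card A)) * (\<Sum>s\<in>A. q s)"
    by (simp add: quadratic_form_scaleR_sum q_def sum_distrib_left sum_divide_distrib)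
  ultimately show "ereal \<phi> \<le> ereal (real s0 * (x \<bullet> (((1 / real (card A)) *\<^sub>R (\<Sum>s\<in>A. Ms s)) *v x))
                                    / (l1norm (restr_vec S0 x))\<^sup>2)"
    by (simp add: L_def)
qed

lemma maxnorm_attained: "\<exists>i j. maxnorm A = \<bar>A $ i $ j\<bar>"
proof -
  have "{\<bar>A $ i $ j\<bar> | i j. True} = (\<lambda>(i, j). \<bar>A $ i $ j\<bar>) ` UNIV"
    by auto
  then have "maxnorm A \<in> {\<bar>A $ i $ j\<bar> | i j. True}"
    unfolding maxnorm_def by (simp only:) (rule Max_in; simp)
  then show ?thesis by blast
qed

lemma (in finite_measure) measure_le_sum_if_AE_covered:
  assumes "finite I" and B: "\<And>i. i \<in> I \<Longrightarrow> B i \<in> sets M"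
    and covered: "AE \<omega> in M. \<omega> \<in> E \<longrightarrow> (\<exists>i\<in>I. \<omega> \<in> B i)"
  shows "measure M E \<le> (\<Sum>i\<in>I. measure M (B i))"
proof -
  have "emeasure M E \<le> emeasure M (\<Union>i\<in>I. B i)"
    using covered by (intro emeasure_mono_AE) (auto intro: B assms(1))
  then have "measure M E \<le> measure M (\<Union>i\<in>I. B i)"
    by (simp add: emeasure_eq_measure)
  also have "\<dots> \<le> (\<Sum>i\<in>I. measure M (B i))"
    by (rule measure_UNION_le[OF assms(1)]) (auto intro: B)
  finally show ?thesis .
qed

lemma ln_two_square_pos:
  fixes d :: real
  assumes "d \<ge> 1"
  shows "0 < ln (2 * d\<^sup>2)"
  using assms one_le_power[of d 2] by (intro ln_gt_zero) linarith

lemma square_mult_exp_le: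
  fixes d x :: real
  assumes d: "d \<ge> 1" and x: "2 * ln (2 * d\<^sup>2) \<le> x"
  shows "d\<^sup>2 * (2 * exp (- (8 * x))) \<le> exp (- (x / 2))"
proof -
  have x_pos: "0 < x" using ln_two_square_pos[OF d] x by linarith
  have "2 * d\<^sup>2 = exp (ln (2 * d\<^sup>2))"
    using d by simp
  also have "\<dots> \<le> exp (x / 2)"
    using x by simp
  finally have "d\<^sup>2 * (2 * exp (- (8 * x))) \<le> exp (x / 2) * exp (- (8 * x))"
    by (simp add: mult.assoc[symmetric] mult.commute[of 2])
  also have "\<dots> \<le> exp (- (x / 2))"
    using x_pos by (simp flip: exp_add)
  finally show ?thesis .
qed

lemma maxnorm_entry_ge:
  fixes A :: "real^'d::finite^'d"
  assumes "ereal \<phi> \<le> \<kappa>" and "\<kappa> / ereal K \<le> ereal (maxnorm A / L)" and "K > 0" and "L > 0"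
    and "c \<le> \<phi> * L / K"
  shows "\<exists>i j. c \<le> \<bar>A $ i $ j\<bar>"
proof -
  have "ereal (\<phi> / K) \<le> \<kappa> / ereal K"
    using ereal_divide_right_mono[OF assms(1), of "ereal K"] \<open>K > 0\<close> by simp
  from order.trans[OF this assms(2)] have "\<phi> / K \<le> maxnorm A / L" by simp
  then have "\<phi> * L / K \<le> maxnorm A"
    using \<open>K > 0\<close> \<open>L > 0\<close> by (simp add: field_simps)
  then have "c \<le> maxnorm A"
    using \<open>c \<le> \<phi> * L / K\<close> by linarith
  with maxnorm_attained[of A] show ?thesis by metis
qed

section \<open>Gram matrix of the pulled arm\<close>

lemma borel_measurable_vec_nth[measurable (raw)]:
  fixes f :: "'w \<Rightarrow> 'a::topological_space^'n::finite"
  assumes "f \<in> borel_measurable M"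
  shows "(\<lambda>x. f x $ i) \<in> borel_measurable M"
  by (rule measurable_compose[OF assms borel_measurable_continuous_onI]) (intro continuous_intros)

lemma abs_mult_components_le:
  fixes v :: "real^'d::finite"
  assumes "norm v \<le> b"
  shows "\<bar>v $ i * v $ j\<bar> \<le> b\<^sup>2"
proof -
  have "0 \<le> b" using assms norm_ge_zero[of v] by linarith
  then have "\<bar>v $ i\<bar> * \<bar>v $ j\<bar> \<le> b * b"
    by (intro mult_mono order.trans[OF component_le_norm_cart assms]) auto
  then show ?thesis by (simp add: abs_mult power2_eq_square)
qed

lemma real_cond_exp_select:
  fixes Z :: "'k::finite \<Rightarrow> 'w \<Rightarrow> real" and J :: "'w \<Rightarrow> 'k"
  assumes M: "prob_space M" and F: "subalgebra M F"
    and Z_meas: "\<And>k. Z k \<in> borel_measurable F"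
    and Z_bounded: "\<And>k. AE \<omega> in M. \<bar>Z k \<omega>\<bar> \<le> b"
    and J_meas[measurable]: "J \<in> M \<rightarrow>\<^sub>M count_space UNIV"
    and J_law: "\<And>k. AE \<omega> in M. real_cond_exp M F (indicator {\<omega> \<in> space M. J \<omega> = k}) \<omega> = w k \<omega>"
  shows "AE \<omega> in M. real_cond_exp M F (\<lambda>\<omega>. Z (J \<omega>) \<omega>) \<omega> = (\<Sum>k\<in>UNIV. Z k \<omega> * w k \<omega>)"
proof -
  interpret prob_space M by fact
  interpret finite_measure_subalgebra M F by unfold_locales (rule F)
  define ind where "ind k = (indicator {\<omega> \<in> space M. J \<omega> = k} :: 'w \<Rightarrow> real)" for k
  have [measurable]: "Z k \<in> borel_measurable M" for k
    by (rule measurable_from_subalg[OF F Z_meas])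
  have ind_meas[measurable]: "ind k \<in> borel_measurable M" for k
    unfolding ind_def by measurable
  have term_int: "integrable M (\<lambda>\<omega>. Z k \<omega> * ind k \<omega>)" for k
  proof (rule integrable_const_bound[where B=b])
    show "AE \<omega> in M. norm (Z k \<omega> * ind k \<omega>) \<le> b"
      using Z_bounded[of k] by eventually_elim (auto simp: ind_def indicator_def)
  qed simp
  have "AE \<omega> in M. real_cond_exp M F (\<lambda>\<omega>. Z (J \<omega>) \<omega>) \<omega>
                     = real_cond_exp M F (\<lambda>\<omega>. \<Sum>k\<in>UNIV. Z k \<omega> * ind k \<omega>) \<omega>"
    by (rule real_cond_exp_cong) (auto simp: ind_def indicator_def if_distrib cong: if_cong)
  moreover have "AE \<omega> in M. real_cond_exp M F (\<lambda>\<omega>. \<Sum>k\<in>UNIV. Z k \<omega> * ind k \<omega>) \<omega>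
                     = (\<Sum>k\<in>UNIV. real_cond_exp M F (\<lambda>\<omega>. Z k \<omega> * ind k \<omega>) \<omega>)"
    by (rule real_cond_exp_sum) (rule term_int)
  moreover have "AE \<omega> in M. \<forall>k\<in>UNIV. real_cond_exp M F (\<lambda>\<omega>. Z k \<omega> * ind k \<omega>) \<omega> = Z k \<omega> * w k \<omega>"
  proof (rule AE_finite_allI)
    fix k
    from real_cond_exp_mult[OF Z_meas ind_meas term_int, of k] J_law[of k]
    show "AE \<omega> in M. real_cond_exp M F (\<lambda>\<omega>. Z k \<omega> * ind k \<omega>) \<omega> = Z k \<omega> * w k \<omega>"
      unfolding ind_def by eventually_elim simp_all
  qed simp
  ultimately show ?thesis by eventually_elim simp
qed

definition pulled_gram :: "(nat \<Rightarrow> 'w \<Rightarrow> real^'d^'k) \<Rightarrow> (nat \<Rightarrow> 'w \<Rightarrow> 'k) \<Rightarrow> nat \<Rightarrow> 'd \<Rightarrow> 'd \<Rightarrow> 'w \<Rightarrow> real" where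
  "pulled_gram X I s i j \<omega> = (X s \<omega> $ I s \<omega>) $ i * (X s \<omega> $ I s \<omega>) $ j"

lemma pulled_gram_eq_sum:
  "pulled_gram X I s i j \<omega> = (\<Sum>k\<in>UNIV. X s \<omega> $ k $ i * X s \<omega> $ k $ j * indicator {k} (I s \<omega>))"
  by (simp add: pulled_gram_def indicator_def if_distrib cong: if_cong)

lemma borel_measurable_pulled_gram:
  assumes [measurable]: "X s \<in> N \<rightarrow>\<^sub>M borel" "I s \<in> N \<rightarrow>\<^sub>M count_space UNIV"
  shows "pulled_gram X I s i j \<in> borel_measurable N"
  unfolding pulled_gram_eq_sum[abs_def] by measurable

definition greedy_weight :: "real^'d^'k::finite \<Rightarrow> real^'d \<Rightarrow> 'k \<Rightarrow> real" where
  "greedy_weight a th k = (if k \<in> argmax_arms a th then 1 / real (card (argmax_arms a th)) else 0)"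

lemma greedy_weight_eq_count:
  "greedy_weight a th k =
     (if \<forall>k'. a $ k' \<bullet> th \<le> a $ k \<bullet> th
      then 1 / (\<Sum>k'\<in>UNIV. if \<forall>k''. a $ k'' \<bullet> th \<le> a $ k' \<bullet> th then 1 else 0) else 0)"
  by (simp add: greedy_weight_def argmax_arms_def sum.If_cases)

lemma borel_measurable_greedy_weight[measurable (raw)]:
  assumes "f \<in> borel_measurable M" and "g \<in> borel_measurable M"
  shows "(\<lambda>x. greedy_weight (f x) (g x) k) \<in> borel_measurable M"
  unfolding greedy_weight_eq_count using assms by measurable

lemma greedy_weight_nonneg: "0 \<le> greedy_weight a th k"
  by (simp add: greedy_weight_def)

lemma greedy_weight_le_one: "greedy_weight a th k \<le> 1"
proof (cases "k \<in> argmax_arms a th")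
  case True
  then have "card (argmax_arms a th) \<ge> 1"
    by (metis One_nat_def Suc_leI card_gt_0_iff empty_iff finite)
  then show ?thesis using True by (simp add: greedy_weight_def)
qed (simp add: greedy_weight_def)

text \<open>Truncated outside the almost sure bound \<open>b\<close> on the arms, so that the integrand is bounded
  everywhere, as the freezing lemma requires.\<close>
definition greedy_gram_trunc :: "real \<Rightarrow> 'd \<Rightarrow> 'd \<Rightarrow> real^'d^'k::finite \<Rightarrow> real^'d \<Rightarrow> real" where
  "greedy_gram_trunc b i j a th =
     (if \<forall>k. norm (a $ k) \<le> b then \<Sum>k\<in>UNIV. a $ k $ i * a $ k $ j * greedy_weight a th k else 0)"

lemma borel_measurable_greedy_gram_trunc[measurable (raw)]:
  assumes "f \<in> borel_measurable M" and "g \<in> borel_measurable M"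
  shows "(\<lambda>x. greedy_gram_trunc b i j (f x) (g x)) \<in> borel_measurable M"
  unfolding greedy_gram_trunc_def using assms by measurable

lemma abs_greedy_gram_trunc_le: "\<bar>greedy_gram_trunc b i j a th\<bar> \<le> real CARD('k) * b\<^sup>2"
  for a :: "real^'d::finite^'k::finite"
proof (cases "\<forall>k. norm (a $ k) \<le> b")
  case True
  have "\<bar>a $ k $ i * a $ k $ j * greedy_weight a th k\<bar> \<le> b\<^sup>2" for k
  proof -
    have "\<bar>a $ k $ i * a $ k $ j\<bar> * \<bar>greedy_weight a th k\<bar> \<le> b\<^sup>2 * 1"
      using True greedy_weight_nonneg[of a th k] greedy_weight_le_one[of a th k]
      by (intro mult_mono abs_mult_components_le) auto
    then show ?thesis by (simp add: abs_mult)
  qed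
  then have "\<bar>\<Sum>k\<in>UNIV. a $ k $ i * a $ k $ j * greedy_weight a th k\<bar> \<le> (\<Sum>k\<in>(UNIV::'k set). b\<^sup>2)"
    by (intro order.trans[OF sum_abs] sum_mono)
  then show ?thesis using True by (simp add: greedy_gram_trunc_def)
qed (auto simp: greedy_gram_trunc_def)

lemma integral_greedy_gram_trunc:
  assumes sets_pA: "sets pA = sets borel" and bounded: "AE a in pA. \<forall>k. norm (a $ k) \<le> b"
  shows "(\<integral>a. greedy_gram_trunc b i j a th \<partial>pA) = Sigma_pop pA th $ i $ j"
proof -
  have "(\<integral>a. greedy_gram_trunc b i j a th \<partial>pA) = (\<integral>a. (\<Sum>k\<in>UNIV. a $ k $ i * a $ k $ j * greedy_weight a th k) \<partial>pA)"
    using bounded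
    by (intro integral_cong_AE) (auto simp: greedy_gram_trunc_def measurable_cong_sets[OF sets_pA refl] elim!: eventually_mono)
  then show ?thesis
    by (simp add: Sigma_pop_def greedy_weight_def)
qed

section \<open>Histories of the bandit process and the conditional Gram matrix\<close>

lemma preimgs_subset_sets: "f \<in> M \<rightarrow>\<^sub>M N \<Longrightarrow> preimgs M f N \<subseteq> sets M"
  by (auto simp: preimgs_def)

lemma measurable_if_preimgs_subset:
  assumes "f \<in> M \<rightarrow>\<^sub>M N" and "preimgs M f N \<subseteq> sets H" and "space H = space M"
  shows "f \<in> H \<rightarrow>\<^sub>M N"
proof (rule measurableI)
  fix A assume "A \<in> sets N"
  then have "f -` A \<inter> space M \<in> preimgs M f N" by (auto simp: preimgs_def)
  then show "f -` A \<inter> space H \<in> sets H" using assms by auto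
next
  fix x assume "x \<in> space H"
  then show "f x \<in> space N" using assms measurable_space by metis
qed

definition hist_generators :: "'w measure \<Rightarrow> (nat \<Rightarrow> 'w \<Rightarrow> real^'d^'k) \<Rightarrow> (nat \<Rightarrow> 'w \<Rightarrow> 'k)
    \<Rightarrow> (nat \<Rightarrow> 'w \<Rightarrow> real) \<Rightarrow> nat \<Rightarrow> 'w set set" where
  "hist_generators M X I r n = (\<Union>u\<in>{1..n}. preimgs M (X u) borel
      \<union> preimgs M (I u) (count_space UNIV) \<union> preimgs M (r u) borel)"

context
  fixes M :: "'w measure" and X :: "nat \<Rightarrow> 'w \<Rightarrow> real^'d::finite^'k::finite"
    and I :: "nat \<Rightarrow> 'w \<Rightarrow> 'k" and r :: "nat \<Rightarrow> 'w \<Rightarrow> real"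
  assumes X_meas: "\<And>t. X t \<in> M \<rightarrow>\<^sub>M borel"
    and I_meas: "\<And>t. I t \<in> M \<rightarrow>\<^sub>M count_space UNIV"
    and r_meas: "\<And>t. r t \<in> M \<rightarrow>\<^sub>M borel"
begin

lemma hist_generators_subset_sets: "hist_generators M X I r n \<subseteq> sets M"
  unfolding hist_generators_def
  using preimgs_subset_sets[OF X_meas] preimgs_subset_sets[OF I_meas] preimgs_subset_sets[OF r_meas]
  by blast

lemma sets_hist: "sets (hist M X I r n) = sigma_sets (space M) (hist_generators M X I r n)"
proof -
  have "hist_generators M X I r n \<subseteq> Pow (space M)"
    using hist_generators_subset_sets sets.sets_into_space by blast
  moreover have "hist M X I r n = sigma (space M) (hist_generators M X I r n)"
    by (simp add: hist_def hist_generators_def)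
  ultimately show ?thesis
    by (simp add: sets_measure_of)
qed

lemma space_hist: "space (hist M X I r n) = space M"
  by (simp add: hist_def space_measure_of_conv)

lemma subalgebra_hist: "subalgebra M (hist M X I r n)"
  unfolding subalgebra_def
  using sets.sigma_sets_subset[OF hist_generators_subset_sets] by (simp add: sets_hist space_hist)

lemma sets_hist_mono: "m \<le> n \<Longrightarrow> sets (hist M X I r m) \<subseteq> sets (hist M X I r n)"
  unfolding sets_hist hist_generators_def by (intro sigma_sets_mono' UN_mono) auto

lemma measurable_pulled_arm_hist:
  assumes "1 \<le> s" and "s \<le> n"
  shows "X s \<in> hist M X I r n \<rightarrow>\<^sub>M borel" and "I s \<in> hist M X I r n \<rightarrow>\<^sub>M count_space UNIV"
proof -
  have gen: "preimgs M (X s) borel \<union> preimgs M (I s) (count_space UNIV) \<subseteq> sets (hist M X I r n)"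
    using assms unfolding sets_hist hist_generators_def
    by (intro order.trans[OF _ sigma_sets_superset_generator]) auto
  show "X s \<in> hist M X I r n \<rightarrow>\<^sub>M borel"
    using gen by (intro measurable_if_preimgs_subset[OF X_meas]) (auto simp: space_hist)
  show "I s \<in> hist M X I r n \<rightarrow>\<^sub>M count_space UNIV"
    using gen by (intro measurable_if_preimgs_subset[OF I_meas]) (auto simp: space_hist)
qed

lemma sets_hist_ctx:
  "sets (hist_ctx M X I r t) = sigma_sets (space M) (sets (hist M X I r (t - 1)) \<union> preimgs M (X t) borel)"
proof -
  have "sets (hist M X I r (t - 1)) \<union> preimgs M (X t) borel \<subseteq> sets M"
    using subalgebra_hist preimgs_subset_sets[OF X_meas] by (auto simp: subalgebra_def)
  then show ?thesis
    unfolding hist_ctx_def using sets.sets_into_space by (subst sets_measure_of) blast+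
qed

lemma space_hist_ctx: "space (hist_ctx M X I r t) = space M"
  by (simp add: hist_ctx_def space_measure_of_conv)

lemma subalgebra_hist_ctx: "subalgebra M (hist_ctx M X I r t)"
proof -
  have "sets (hist M X I r (t - 1)) \<union> preimgs M (X t) borel \<subseteq> sets M"
    using subalgebra_hist preimgs_subset_sets[OF X_meas] by (auto simp: subalgebra_def)
  from sets.sigma_sets_subset[OF this] show ?thesis
    unfolding subalgebra_def by (simp add: sets_hist_ctx space_hist_ctx)
qed

lemma subalgebra_hist_ctx_hist: "subalgebra (hist_ctx M X I r t) (hist M X I r (t - 1))"
  unfolding subalgebra_def sets_hist_ctx
  using sigma_sets_superset_generator[of "sets (hist M X I r (t - 1)) \<union> preimgs M (X t) borel" "space M"]
  by (auto simp: space_hist space_hist_ctx)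

lemma measurable_context_hist_ctx: "X t \<in> hist_ctx M X I r t \<rightarrow>\<^sub>M borel"
  using sigma_sets_superset_generator[of "sets (hist M X I r (t - 1)) \<union> preimgs M (X t) borel" "space M"]
  by (intro measurable_if_preimgs_subset[OF X_meas]) (auto simp: sets_hist_ctx space_hist_ctx)

lemma cond_pulled_gram_eq_Sigma_pop:
  fixes th :: "'w \<Rightarrow> real^'d"
  assumes M: "prob_space M" and sets_pA: "sets pA = sets borel"
    and X_distr: "distr M borel (X s) = pA"
    and X_indep: "prob_space.indep_set M (sets (hist M X I r (s - 1))) (preimgs M (X s) borel)"
    and bounded: "AE a in pA. \<forall>k. norm (a $ k) \<le> b"
    and ties: "\<And>k. AE \<omega> in M. real_cond_exp M (hist_ctx M X I r s)
                   (indicator {\<omega> \<in> space M. I s \<omega> = k}) \<omega> = greedy_weight (X s \<omega>) (th \<omega>) k"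
    and th_meas: "th \<in> hist M X I r (s - 1) \<rightarrow>\<^sub>M borel"
  shows "AE \<omega> in M. real_cond_exp M (hist M X I r (s - 1)) (pulled_gram X I s i j) \<omega>
           = Sigma_pop pA (th \<omega>) $ i $ j"
proof -
  interpret prob_space M by fact
  define H where "H = hist M X I r (s - 1)"
  define F where "F = hist_ctx M X I r s"
  have H: "subalgebra M H" unfolding H_def by (rule subalgebra_hist)
  have F: "subalgebra M F" unfolding F_def by (rule subalgebra_hist_ctx)
  interpret finite_measure_subalgebra M H by unfold_locales (rule H)
  have [measurable]: "X s \<in> F \<rightarrow>\<^sub>M borel" unfolding F_def by (rule measurable_context_hist_ctx)
  note X_meas[measurable] I_meas[measurable]
  have [measurable]: "th \<in> borel_measurable M"
    using measurable_from_subalg[OF H] th_meas by (simp add: H_def)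
  have X_bounded: "AE \<omega> in M. \<forall>k. norm (X s \<omega> $ k) \<le> b"
    by (rule AE_distrD[OF X_meas]) (unfold X_distr, rule bounded)
  have gram_int: "integrable M (pulled_gram X I s i j)"
    using X_bounded
    by (intro integrable_const_bound[where B="b\<^sup>2"] borel_measurable_pulled_gram X_meas I_meas)
       (auto simp: pulled_gram_def elim!: eventually_mono intro: abs_mult_components_le)
  have "AE \<omega> in M. real_cond_exp M F (pulled_gram X I s i j) \<omega>
          = (\<Sum>k\<in>UNIV. X s \<omega> $ k $ i * X s \<omega> $ k $ j * greedy_weight (X s \<omega>) (th \<omega>) k)"
  proof (unfold pulled_gram_def, rule real_cond_exp_select[OF M F, where b="b\<^sup>2"])
    show "(\<lambda>\<omega>. X s \<omega> $ k $ i * X s \<omega> $ k $ j) \<in> borel_measurable F" for k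
      by measurable
    show "AE \<omega> in M. \<bar>X s \<omega> $ k $ i * X s \<omega> $ k $ j\<bar> \<le> b\<^sup>2" for k
      using X_bounded by eventually_elim (simp add: abs_mult_components_le)
  qed (use ties in \<open>simp_all add: F_def\<close>)
  then have given_ctx: "AE \<omega> in M. real_cond_exp M F (pulled_gram X I s i j) \<omega>
                          = greedy_gram_trunc b i j (X s \<omega>) (th \<omega>)"
    using X_bounded by eventually_elim (simp add: greedy_gram_trunc_def)
  have "AE \<omega> in M. real_cond_exp M H (pulled_gram X I s i j) \<omega>
                     = real_cond_exp M H (real_cond_exp M F (pulled_gram X I s i j)) \<omega>"
    using real_cond_exp_nested_subalg[OF F _ gram_int] subalgebra_hist_ctx_hist
    by (auto simp: H_def F_def elim!: eventually_mono)
  moreover have "AE \<omega> in M. real_cond_exp M H (real_cond_exp M F (pulled_gram X I s i j)) \<omega>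
                     = real_cond_exp M H (\<lambda>\<omega>. greedy_gram_trunc b i j (X s \<omega>) (th \<omega>)) \<omega>"
    by (rule real_cond_exp_cong[OF given_ctx]) auto
  moreover have "AE \<omega> in M. real_cond_exp M H (\<lambda>\<omega>. greedy_gram_trunc b i j (X s \<omega>) (th \<omega>)) \<omega>
                     = (\<integral>a. greedy_gram_trunc b i j a (th \<omega>) \<partial>distr M borel (X s))"
    using real_cond_exp_indep_freeze[OF M H X_meas th_meas[folded H_def] X_indep[folded H_def],
            where f="\<lambda>(a, th). greedy_gram_trunc b i j a th" and c="real CARD('k) * b\<^sup>2"]
    by (simp add: case_prod_beta abs_greedy_gram_trunc_le)
  ultimately show ?thesis
    by eventually_elim (simp add: H_def X_distr integral_greedy_gram_trunc[OF sets_pA bounded])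
qed

lemma pulled_gram_deviation_tail:
  assumes M: "prob_space M"
    and bounded: "\<And>s. s \<ge> 1 \<Longrightarrow> AE \<omega> in M. \<forall>k. norm (X s \<omega> $ k) \<le> b"
    and b: "b > 0" and n: "n \<ge> 1" and \<epsilon>: "\<epsilon> > 0"
  shows "measure M {\<omega> \<in> space M. \<epsilon> \<le> \<bar>\<Sum>s\<in>{1..n}. pulled_gram X I s i j \<omega>
             - real_cond_exp M (hist M X I r (s - 1)) (pulled_gram X I s i j) \<omega>\<bar>}
           \<le> 2 * exp (- (\<epsilon>\<^sup>2 / (8 * real n * b ^ 4)))"
proof -
  have "measure M {\<omega> \<in> space M. \<epsilon> \<le> \<bar>\<Sum>s\<in>{1..n}. pulled_gram X I s i j \<omega>
             - real_cond_exp M (hist M X I r (s - 1)) (pulled_gram X I s i j) \<omega>\<bar>}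
           \<le> 2 * exp (- (\<epsilon>\<^sup>2 / (8 * real n * (b\<^sup>2)\<^sup>2)))"
  proof (rule azuma_centered_tail[OF M subalgebra_hist sets_hist_mono _ _ _ n \<epsilon>])
    fix s :: nat assume s: "s \<ge> 1"
    show "pulled_gram X I s i j \<in> borel_measurable (hist M X I r s)"
      using measurable_pulled_arm_hist[OF s order.refl] by (intro borel_measurable_pulled_gram)
    show "AE \<omega> in M. \<bar>pulled_gram X I s i j \<omega>\<bar> \<le> b\<^sup>2"
      using bounded[OF s] by eventually_elim (simp add: pulled_gram_def abs_mult_components_le)
  qed (use b in auto)
  then show ?thesis by (simp flip: power_mult)
qed

end

theorem lemma10:
  fixes M :: "'w measure"
    and pA :: "(real^'d::finite^'k::finite) measure"
    and X :: "nat \<Rightarrow> 'w \<Rightarrow> real^'d^'k"   \<comment> \<open>context sets; A_{t,k} = X t \<omega> $ k\<close>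
    and I :: "nat \<Rightarrow> 'w \<Rightarrow> 'k"              \<comment> \<open>index of the pulled arm\<close>
    and r :: "nat \<Rightarrow> 'w \<Rightarrow> real"            \<comment> \<open>rewards\<close>
    and thetahat :: "nat \<Rightarrow> 'w \<Rightarrow> real^'d"  \<comment> \<open>estimates used in round t\<close>
    and \<theta> :: "real^'d" and s0 :: nat and s2 sA \<sigma> phi0 lam0 :: real and t :: nat
  defines "S \<equiv> {i. \<theta> $ i \<noteq> 0}"
    and "A \<equiv> (\<lambda>s \<omega>. X s \<omega> $ I s \<omega>)"
    and "H \<equiv> hist M X I r"
    and "C0 \<equiv> min (1/2) (phi0\<^sup>2 / (256 * real s0 * sA\<^sup>2))"
    and "SigmaHat \<equiv> (\<lambda>\<omega>. (1 / real t) *\<^sub>R (\<Sum>s\<in>{1..t}. outer (X s \<omega> $ I s \<omega>)))"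
    and "SigmaT \<equiv> (\<lambda>\<omega>. (\<chi> i j. (1 / real t) *
            (\<Sum>s\<in>{1..t}. real_cond_exp M (hist M X I r (s - 1))
                 (\<lambda>\<omega>'. (X s \<omega>' $ I s \<omega>') $ i * (X s \<omega>' $ I s \<omega>') $ j) \<omega>)))"
  assumes K: "CARD('k) \<ge> 2"
    and M: "prob_space M"
    and pA: "prob_space pA" "sets pA = sets borel"
    \<comment> \<open>measurability of the observed process\<close>
    and X_meas: "\<And>t. X t \<in> M \<rightarrow>\<^sub>M borel"
    and I_meas: "\<And>t. I t \<in> M \<rightarrow>\<^sub>M count_space UNIV"
    and r_meas: "\<And>t. r t \<in> M \<rightarrow>\<^sub>M borel"
    \<comment> \<open>contexts: i.i.d. with law pA, the round-t context independent of the past\<close>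
    and X_distr: "\<And>t. t \<ge> 1 \<Longrightarrow> distr M borel (X t) = pA"
    and X_indep: "\<And>t. t \<ge> 1 \<Longrightarrow>
        prob_space.indep_set M (sets (H (t - 1))) (preimgs M (X t) borel)"
    \<comment> \<open>noise: conditionally on F_t and A_t, mean zero and sigma-sub-Gaussian\<close>
    and noise_int: "\<And>t. t \<ge> 1 \<Longrightarrow> integrable M (\<lambda>\<omega>. r t \<omega> - A t \<omega> \<bullet> \<theta>)"
    and noise_mean: "\<And>t. t \<ge> 1 \<Longrightarrow> AE \<omega> in M.
        real_cond_exp M (hist_ctx_act M X I r t) (\<lambda>\<omega>. r t \<omega> - A t \<omega> \<bullet> \<theta>) \<omega> = 0"
    and noise_subg: "\<And>t l. t \<ge> 1 \<Longrightarrow>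
        integrable M (\<lambda>\<omega>. exp (l * (r t \<omega> - A t \<omega> \<bullet> \<theta>))) \<and>
        (AE \<omega> in M. real_cond_exp M (hist_ctx_act M X I r t)
                        (\<lambda>\<omega>. exp (l * (r t \<omega> - A t \<omega> \<bullet> \<theta>))) \<omega> \<le> exp (l\<^sup>2 * \<sigma>\<^sup>2 / 2))"
    \<comment> \<open>Assumption 1\<close>
    and s0: "s0 \<ge> 1" and sparse: "card S \<le> s0" and norm_theta: "norm \<theta> \<le> s2"
    and sA: "sA > 0" and bounded: "AE a in pA. \<forall>k. norm (a $ k) \<le> sA"
    \<comment> \<open>Assumption 2\<close>
    and phi0_pos: "phi0 > 0" and compat_ass: "\<And>\<theta>'. compat s0 (Sigma_pop pA \<theta>') S \<ge> ereal (phi0\<^sup>2)"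
    \<comment> \<open>the TH LASSO bandit algorithm with parameter lambda0\<close>
    and lam0_pos: "lam0 > 0"
    and init: "\<exists>c. \<forall>\<omega>\<in>space M. thetahat 1 \<omega> = c"
    and greedy: "\<And>t \<omega>. t \<ge> 1 \<Longrightarrow> \<omega> \<in> space M \<Longrightarrow> I t \<omega> \<in> argmax_arms (X t \<omega>) (thetahat t \<omega>)"
    and tie_uniform: "\<And>t k. t \<ge> 1 \<Longrightarrow> AE \<omega> in M.
        real_cond_exp M (hist_ctx M X I r t) (indicator {\<omega>\<in>space M. I t \<omega> = k}) \<omega> =
          (if k \<in> argmax_arms (X t \<omega>) (thetahat t \<omega>)
           then 1 / real (card (argmax_arms (X t \<omega>) (thetahat t \<omega>))) else 0)"
    and update: "\<And>t \<omega>. t \<ge> 1 \<Longrightarrow> \<omega> \<in> space M \<Longrightarrow>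
        \<exists>L. (\<forall>th. lasso_obj (lasso_lambda lam0 CARD('d) t) t (\<lambda>s. A s \<omega>) (\<lambda>s. r s \<omega>) L
                   \<le> lasso_obj (lasso_lambda lam0 CARD('d) t) t (\<lambda>s. A s \<omega>) (\<lambda>s. r s \<omega>) th) \<and>
            thetahat (Suc t) \<omega> =
              th_update (lasso_lambda lam0 CARD('d) t) t (\<lambda>s. A s \<omega>) (\<lambda>s. r s \<omega>) L"
    and thetahat_meas: "\<And>t. t \<ge> 1 \<Longrightarrow> thetahat t \<in> H (t - 1) \<rightarrow>\<^sub>M borel"
    \<comment> \<open>time horizon\<close>
    and t_large: "real t \<ge> 2 * ln (2 * (real CARD('d)) ^ 2) / C0 ^ 2"
  shows "measure M {\<omega> \<in> space M.
            ereal (maxnorm (SigmaHat \<omega> - SigmaT \<omega>) / (2 * sA\<^sup>2))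
              \<ge> compat s0 (SigmaT \<omega>) S / ereal (64 * real s0 * sA\<^sup>2)}
         \<le> exp (- (real t * C0\<^sup>2 / 2))"
  (is "measure M ?E \<le> _")
proof -
  interpret prob_space M by (rule M)
  have C0_pos: "C0 > 0" unfolding C0_def using phi0_pos s0 sA by simp
  have C0_le: "C0 \<le> phi0\<^sup>2 / (256 * real s0 * sA\<^sup>2)" unfolding C0_def by simp
  have tC0: "2 * ln (2 * (real CARD('d))\<^sup>2) \<le> real t * C0\<^sup>2"
    using t_large C0_pos by (simp add: pos_divide_le_eq)
  have "0 < ln (2 * (real CARD('d))\<^sup>2)"
    by (rule ln_two_square_pos) simp
  then have "0 < real t * C0\<^sup>2"
    using tC0 by linarith
  then have t: "t \<ge> 1" by (cases t) auto
  define \<epsilon> where "\<epsilon> = real t * (8 * sA\<^sup>2 * C0)"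
  define dev where "dev i j \<omega> = (\<Sum>s\<in>{1..t}. pulled_gram X I s i j \<omega>
                                   - real_cond_exp M (H (s - 1)) (pulled_gram X I s i j) \<omega>)" for i j \<omega>
  define B where "B ij = {\<omega> \<in> space M. \<epsilon> \<le> \<bar>dev (fst ij) (snd ij) \<omega>\<bar>}" for ij
  have X_bounded: "AE \<omega> in M. \<forall>k. norm (X s \<omega> $ k) \<le> sA" if "s \<ge> 1" for s
    by (rule AE_distrD[OF X_meas]) (unfold X_distr[OF that], rule bounded)
  have tail: "measure M (B ij) \<le> 2 * exp (- (8 * (real t * C0\<^sup>2)))" for ij
  proof -
    have "\<epsilon> > 0" using t sA C0_pos by (simp add: \<epsilon>_def)
    have "measure M (B ij) \<le> 2 * exp (- (\<epsilon>\<^sup>2 / (8 * real t * sA ^ 4)))"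
      unfolding B_def dev_def H_def using X_bounded \<open>\<epsilon> > 0\<close>
      by (rule pulled_gram_deviation_tail[where X=X and I=I and r=r, OF X_meas I_meas r_meas M _ sA t])
    also have "\<epsilon>\<^sup>2 / (8 * real t * sA ^ 4) = 8 * (real t * C0\<^sup>2)"
      using t sA by (simp add: \<epsilon>_def power2_eq_square power4_eq_xxxx)
    finally show ?thesis .
  qed
  have [measurable]: "pulled_gram X I s i j \<in> borel_measurable M" for s i j
    by (rule borel_measurable_pulled_gram[OF X_meas I_meas])
  have B_sets: "B ij \<in> events" for ij
    unfolding B_def dev_def by measurable
  have "AE \<omega> in M. \<forall>s\<in>{1..t}. \<forall>i\<in>UNIV. \<forall>j\<in>UNIV.
          real_cond_exp M (H (s - 1)) (pulled_gram X I s i j) \<omega> = Sigma_pop pA (thetahat s \<omega>) $ i $ j"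
    using cond_pulled_gram_eq_Sigma_pop[where X=X and I=I and r=r, OF X_meas I_meas r_meas M pA(2) X_distr X_indep[unfolded H_def]
            bounded tie_uniform[folded greedy_weight_def] thetahat_meas[unfolded H_def]]
    by (intro AE_finite_allI) (auto simp: H_def)
  then have compat_SigmaT: "AE \<omega> in M. ereal (phi0\<^sup>2) \<le> compat s0 (SigmaT \<omega>) S"
  proof eventually_elim
    case (elim \<omega>)
    then have "SigmaT \<omega> = (1 / real (card {1..t})) *\<^sub>R (\<Sum>s\<in>{1..t}. Sigma_pop pA (thetahat s \<omega>))"
      by (simp add: SigmaT_def H_def pulled_gram_def[abs_def] vec_eq_iff sum_component)
    then show ?case
      by (simp only:) (intro compat_average_ge compat_ass; use t in simp)
  qed
  have "AE \<omega> in M. \<omega> \<in> ?E \<longrightarrow> (\<exists>ij\<in>UNIV. \<omega> \<in> B ij)"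
    using compat_SigmaT
  proof eventually_elim
    case (elim \<omega>)
    show ?case
    proof
      assume \<omega>: "\<omega> \<in> ?E"
      have "8 * sA\<^sup>2 * C0 \<le> phi0\<^sup>2 * (2 * sA\<^sup>2) / (64 * real s0 * sA\<^sup>2)"
        using C0_le s0 sA by (simp add: field_simps power2_eq_square)
      then obtain i j where "8 * sA\<^sup>2 * C0 \<le> \<bar>(SigmaHat \<omega> - SigmaT \<omega>) $ i $ j\<bar>"
        using maxnorm_entry_ge[OF elim] \<omega> s0 sA by fastforce
      moreover have "(SigmaHat \<omega> - SigmaT \<omega>) $ i $ j = dev i j \<omega> / real t"
        by (simp add: SigmaHat_def SigmaT_def dev_def H_def pulled_gram_def[abs_def] outer_def
                      sum_subtractf diff_divide_distrib)
      ultimately have "8 * sA\<^sup>2 * C0 \<le> \<bar>dev i j \<omega>\<bar> / real t"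
        by simp
      then have "\<epsilon> \<le> \<bar>dev i j \<omega>\<bar>"
        using t by (simp add: \<epsilon>_def field_simps)
      then show "\<exists>ij\<in>UNIV. \<omega> \<in> B ij"
        using \<omega> by (auto simp: B_def)
    qed
  qed
  then have "measure M ?E \<le> (\<Sum>ij\<in>UNIV. measure M (B ij))"
    by (rule measure_le_sum_if_AE_covered[OF finite B_sets])
  also have "\<dots> \<le> (\<Sum>ij\<in>(UNIV :: ('d \<times> 'd) set). 2 * exp (- (8 * (real t * C0\<^sup>2))))"
    by (rule sum_mono[OF tail])
  also have "\<dots> = (real CARD('d))\<^sup>2 * (2 * exp (- (8 * (real t * C0\<^sup>2))))"
    by (simp add: power2_eq_square)
  also have "\<dots> \<le> exp (- (real t * C0\<^sup>2 / 2))"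
    by (rule square_mult_exp_le[OF _ tC0]) simp
  finally show ?thesis .
qed

end
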